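(* Let $N\ge1$, $K\ge1$, $n_v\ge0$, $L\ge1$, let $\mathbf{T}\in[0,1]^{K\times K}$ be row-stochastic, and let $(X(0),X(1),\dots,X(L))$ be the probabilistic cellular automaton with local transition matrix $\mathbf{T}$ started from an arbitrary initial distribution. Define $\mathbf{A}_\infty=\frac{1}{LN}\sum_{t=1}^L\sum_{n=1}^N\mathbb{E}[\varphi_{n,t-1}^\top\varphi_{n,t-1}]\in\mathbb{R}^{K\times K}$ and, for $k\in[K]$, $\mathbf{b}_\infty(\cdot,k)=\frac{1}{LN}\sum_{t=1}^L\sum_{n=1}^N\mathbb{E}[\varphi_{n,t-1}^\top c_{n,t}(k)]\in\mathbb{R}^{K}$. If $\mathbf{A}_\infty$ is nonsingular, then $\mathbf{T}=\mathbf{A}_\infty^{-1}\mathbf{b}_\infty$.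
   Context: Vertices $[N]$ are arranged on a cycle; $V_n\subset[N]$ is the set of residues modulo $N$ of $n-n_v,\dots,n+n_v$. The chain $X(t)\in[K]^N$ evolves as follows: given $X(t)$, the coordinates $X_n(t+1)$ are conditionally independent with $\mathbb{P}(X_n(t+1)=k\mid X(t))=\varphi_{n,t}\mathbf{T}_{\cdot,k}$, where $\varphi_{n,t}\in\mathbb{R}^{1\times K}$ is the row vector $\varphi_{n,t}(j)=\frac{1}{|V_n|}\sum_{i\in V_n}\mathbf{1}\{X_i(t)=j\}$. Also $c_{n,t}(k)=\mathbf{1}\{X_n(t)=k\}$. $\mathbf{b}_\infty$ is the $K\times K$ matrix with columns $\mathbf{b}_\infty(\cdot,k)$. *)

theory Defs
  imports "HOL-Analysis.Analysis" "HOL-Probability.Probability"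
begin

text \<open>Vertices are 0..N-1 on a cycle (paper's 1..N, shifted). States are the finite type 'k,
  so K = CARD('k). Configurations are functions nat => 'k; only the values on {..<N} matter.\<close>

definition nbhd :: "nat \<Rightarrow> nat \<Rightarrow> nat \<Rightarrow> nat set" where
  "nbhd N nv n = {nat ((int n + d) mod int N) | d. - int nv \<le> d \<and> d \<le> int nv}"

definition phi :: "nat \<Rightarrow> nat \<Rightarrow> (nat \<Rightarrow> 'k) \<Rightarrow> nat \<Rightarrow> 'k \<Rightarrow> real" where
  "phi N nv x n j = real (card {i \<in> nbhd N nv n. x i = j}) / real (card (nbhd N nv n))"

definition cind :: "(nat \<Rightarrow> 'k) \<Rightarrow> nat \<Rightarrow> 'k \<Rightarrow> real" where
  "cind x n k = (if x n = k then 1 else 0)"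

definition row_stochastic :: "real^'k^'k \<Rightarrow> bool" where
  "row_stochastic T \<longleftrightarrow> (\<forall>i j. 0 \<le> T$i$j \<and> T$i$j \<le> 1) \<and> (\<forall>i. (\<Sum>j\<in>UNIV. T$i$j) = 1)"

definition local_law :: "nat \<Rightarrow> nat \<Rightarrow> real^'k^'k \<Rightarrow> (nat \<Rightarrow> 'k) \<Rightarrow> nat \<Rightarrow> ('k::finite) pmf" where
  "local_law N nv T x n = embed_pmf (\<lambda>k. \<Sum>j\<in>UNIV. phi N nv x n j * T$j$k)"

definition pca_step :: "nat \<Rightarrow> nat \<Rightarrow> real^'k^'k \<Rightarrow> (nat \<Rightarrow> 'k) \<Rightarrow> (nat \<Rightarrow> ('k::finite)) pmf" where
  "pca_step N nv T x = Pi_pmf {..<N} undefined (local_law N nv T x)"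

fun pca_dist :: "nat \<Rightarrow> nat \<Rightarrow> real^'k^'k \<Rightarrow> (nat \<Rightarrow> 'k) pmf \<Rightarrow> nat \<Rightarrow> (nat \<Rightarrow> ('k::finite)) pmf" where
  "pca_dist N nv T mu0 0 = mu0"
| "pca_dist N nv T mu0 (Suc t) = bind_pmf (pca_dist N nv T mu0 t) (pca_step N nv T)"

definition pca_pair :: "nat \<Rightarrow> nat \<Rightarrow> real^'k^'k \<Rightarrow> (nat \<Rightarrow> 'k) pmf \<Rightarrow> nat \<Rightarrow> ((nat \<Rightarrow> 'k) \<times> (nat \<Rightarrow> ('k::finite))) pmf" where
  "pca_pair N nv T mu0 t = bind_pmf (pca_dist N nv T mu0 t) (\<lambda>x. map_pmf (\<lambda>y. (x, y)) (pca_step N nv T x))"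

definition A_inf :: "nat \<Rightarrow> nat \<Rightarrow> nat \<Rightarrow> real^'k^'k \<Rightarrow> (nat \<Rightarrow> 'k) pmf \<Rightarrow> real^('k::finite)^'k" where
  "A_inf N nv L T mu0 = (\<chi> i j. (1 / (real L * real N)) *
     (\<Sum>t\<in>{1..L}. \<Sum>n<N. measure_pmf.expectation (pca_dist N nv T mu0 (t - 1))
        (\<lambda>x. phi N nv x n i * phi N nv x n j)))"

definition b_inf :: "nat \<Rightarrow> nat \<Rightarrow> nat \<Rightarrow> real^'k^'k \<Rightarrow> (nat \<Rightarrow> 'k) pmf \<Rightarrow> real^('k::finite)^'k" where
  "b_inf N nv L T mu0 = (\<chi> i k. (1 / (real L * real N)) *
     (\<Sum>t\<in>{1..L}. \<Sum>n<N. measure_pmf.expectation (pca_pair N nv T mu0 (t - 1))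
        (\<lambda>(x, y). phi N nv x n i * cind y n k)))"

end

theory Submission
  imports Defs
begin

text \<open>Conditionally on \<open>X(t) = x\<close>, the indicator \<open>c\<^sub>n\<^sub>,\<^sub>t\<^sub>+\<^sub>1(k)\<close> has expectation
  \<open>\<phi>\<^sub>n\<^sub>,\<^sub>t T(\<cdot>,k)\<close>. Multiplying by \<open>\<phi>\<^sub>n\<^sub>,\<^sub>t(i)\<close>, taking expectations and averaging over
  \<open>n\<close> and \<open>t\<close> gives \<open>b\<^sub>\<infinity> = A\<^sub>\<infinity> T\<close> entrywise, by linearity of expectation alone;
  so \<open>T = A\<^sub>\<infinity>\<^sup>-\<^sup>1 b\<^sub>\<infinity>\<close> whenever \<open>A\<^sub>\<infinity>\<close> is invertible.\<close>

lemma finite_nbhd: "finite (nbhd N nv n)"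
proof -
  have "nbhd N nv n = (\<lambda>d. nat ((int n + d) mod int N)) ` {- int nv..int nv}"
    unfolding nbhd_def by auto
  thus ?thesis by simp
qed

lemma card_nbhd_pos: "card (nbhd N nv n) > 0"
proof -
  have "nat (int n mod int N) \<in> nbhd N nv n"
    unfolding nbhd_def by (rule CollectI, rule exI[of _ 0]) simp
  thus ?thesis using finite_nbhd card_gt_0_iff by blast
qed

lemma phi_nonneg: "0 \<le> phi N nv x n j"
  unfolding phi_def by simp

lemma phi_le_1: "phi N nv x n j \<le> 1"
proof -
  have "card {i \<in> nbhd N nv n. x i = j} \<le> card (nbhd N nv n)"
    using finite_nbhd by (intro card_mono) auto
  thus ?thesis
    using card_nbhd_pos unfolding phi_def by (simp add: divide_le_eq_1)
qed

lemma sum_phi_eq_1: "(\<Sum>j\<in>UNIV. phi N nv (x :: nat \<Rightarrow> 'k::finite) n j) = 1"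
proof -
  let ?S = "nbhd N nv n"
  have "card ?S = (\<Sum>j\<in>(UNIV::'k set). card {i \<in> ?S. x i = j})"
    using sum.group[of ?S UNIV x "\<lambda>_. 1::nat", OF finite_nbhd] by simp
  then have "(\<Sum>j\<in>(UNIV::'k set). real (card {i \<in> ?S. x i = j})) = real (card ?S)"
    by (metis of_nat_sum)
  thus ?thesis
    using card_nbhd_pos unfolding phi_def by (simp add: sum_divide_distrib[symmetric])
qed

lemma pmf_local_law:
  fixes T :: "real^'k::finite^'k"
  assumes "row_stochastic T"
  shows "pmf (local_law N nv T x n) k = (\<Sum>j\<in>UNIV. phi N nv x n j * T$j$k)"
proof -
  have nonneg: "0 \<le> (\<Sum>j\<in>UNIV. phi N nv x n j * T$j$k)" for k
    using assms unfolding row_stochastic_def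
    by (intro sum_nonneg mult_nonneg_nonneg phi_nonneg) auto
  have "(\<Sum>k\<in>UNIV. \<Sum>j\<in>UNIV. phi N nv x n j * T$j$k)
      = (\<Sum>j\<in>UNIV. phi N nv x n j * (\<Sum>k\<in>UNIV. T$j$k))"
    by (subst sum.swap) (simp add: sum_distrib_left)
  also have "\<dots> = 1"
    using assms sum_phi_eq_1 unfolding row_stochastic_def by simp
  finally have sum_eq_1: "(\<Sum>k\<in>UNIV. \<Sum>j\<in>UNIV. phi N nv x n j * T$j$k) = 1" .
  have "(\<integral>\<^sup>+k. ennreal (\<Sum>j\<in>UNIV. phi N nv x n j * T$j$k) \<partial>count_space UNIV) = 1"
    by (simp add: nn_integral_count_space_finite sum_eq_1[symmetric] nonneg sum_nonneg)
  thus ?thesis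
    unfolding local_law_def by (subst pmf_embed_pmf) (auto simp: nonneg)
qed

lemma expectation_bind_pmf_bounded:
  fixes f :: "'b \<Rightarrow> real"
  assumes "\<And>y. \<bar>f y\<bar> \<le> B"
  shows "measure_pmf.expectation (bind_pmf p q) f
    = measure_pmf.expectation p (\<lambda>x. measure_pmf.expectation (q x) f)"
  unfolding measure_pmf_bind
  by (rule integral_bind[where K="count_space UNIV" and B=B and B'=1])
     (auto simp: assms measure_pmf.finite_measure_axioms measure_pmf_in_subprob_algebra
        intro!: measurable_measure_pmf measure_pmf.emeasure_le_1 AE_I2)

lemma expectation_cind_pca_step:
  fixes T :: "real^'k::finite^'k"
  assumes "row_stochastic T" and "n < N"
  shows "measure_pmf.expectation (pca_step N nv T x) (\<lambda>y. cind y n k)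
    = (\<Sum>j\<in>UNIV. phi N nv x n j * T$j$k)"
proof -
  have "measure_pmf.expectation (pca_step N nv T x) (\<lambda>y. cind y n k)
      = measure_pmf.expectation (map_pmf (\<lambda>y. y n) (pca_step N nv T x)) (\<lambda>v. indicator {k} v)"
    by (simp add: cind_def indicator_def of_bool_def)
  also have "map_pmf (\<lambda>y. y n) (pca_step N nv T x) = local_law N nv T x n"
    unfolding pca_step_def using assms(2) by (subst Pi_pmf_component) auto
  also have "measure_pmf.expectation (local_law N nv T x n) (\<lambda>v. indicator {k} v)
      = pmf (local_law N nv T x n) k"
    by (simp add: measure_pmf_single)
  finally show ?thesis
    using pmf_local_law[OF assms(1)] by simp
qed

lemma expectation_phi_cind_pca_pair:
  fixes T :: "real^'k::finite^'k"
  assumes "row_stochastic T" and "n < N"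
  shows "measure_pmf.expectation (pca_pair N nv T mu0 t) (\<lambda>(x, y). phi N nv x n i * cind y n k)
    = (\<Sum>j\<in>UNIV. measure_pmf.expectation (pca_dist N nv T mu0 t)
        (\<lambda>x. phi N nv x n i * phi N nv x n j) * T$j$k)"
proof -
  let ?E = "measure_pmf.expectation (pca_dist N nv T mu0 t)"
  have bounded: "\<bar>(\<lambda>(x, y). phi N nv x n i * cind y n k) z\<bar> \<le> 1" for z
    using phi_nonneg[of N nv "fst z" n i] phi_le_1[of N nv "fst z" n i]
    by (cases z) (auto simp: cind_def)
  have integrable: "integrable (pca_dist N nv T mu0 t) (\<lambda>x. phi N nv x n i * phi N nv x n j * T$j$k)"
    for j
    by (intro measure_pmf.integrable_const_bound[where B="\<bar>T$j$k\<bar>"] AE_I2)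
       (auto simp: abs_mult phi_nonneg phi_le_1
         intro!: mult_le_one mult_left_le_one_le mult_le_cancel_right1[THEN iffD2])
  have "measure_pmf.expectation (pca_pair N nv T mu0 t) (\<lambda>(x, y). phi N nv x n i * cind y n k)
      = ?E (\<lambda>x. phi N nv x n i * (\<Sum>j\<in>UNIV. phi N nv x n j * T$j$k))"
    unfolding pca_pair_def
    by (subst expectation_bind_pmf_bounded[OF bounded])
       (simp add: expectation_cind_pca_step[OF assms])
  also have "\<dots> = ?E (\<lambda>x. \<Sum>j\<in>UNIV. phi N nv x n i * phi N nv x n j * T$j$k)"
    by (simp add: sum_distrib_left mult.assoc)
  also have "\<dots> = (\<Sum>j\<in>UNIV. ?E (\<lambda>x. phi N nv x n i * phi N nv x n j * T$j$k))"
    by (rule Bochner_Integration.integral_sum) (rule integrable)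
  finally show ?thesis by simp
qed

lemma b_inf_eq_A_inf_mult:
  fixes T :: "real^'k::finite^'k"
  assumes "row_stochastic T"
  shows "b_inf N nv L T mu0 = A_inf N nv L T mu0 ** T"
proof -
  let ?E = "\<lambda>t i j n. measure_pmf.expectation (pca_dist N nv T mu0 (t - 1))
    (\<lambda>x. phi N nv x n i * phi N nv x n j)"
  have "(A_inf N nv L T mu0 ** T) $ i $ k = b_inf N nv L T mu0 $ i $ k" for i k
  proof -
    have "(A_inf N nv L T mu0 ** T) $ i $ k
        = (\<Sum>j\<in>UNIV. 1 / (real L * real N) * (\<Sum>t\<in>{1..L}. \<Sum>n<N. ?E t i j n) * T$j$k)"
      by (simp add: matrix_matrix_mult_def A_inf_def)
    also have "\<dots> = 1 / (real L * real N) * (\<Sum>t\<in>{1..L}. \<Sum>n<N. \<Sum>j\<in>UNIV. ?E t i j n * T$j$k)"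
      by (simp add: sum_distrib_left sum_distrib_right mult.assoc sum.swap[of _ UNIV])
    also have "\<dots> = b_inf N nv L T mu0 $ i $ k"
      unfolding b_inf_def using expectation_phi_cind_pca_pair[OF assms] by simp
    finally show ?thesis .
  qed
  thus ?thesis by (simp add: vec_eq_iff)
qed

lemma matrix_inv_mult_cancel_left:
  fixes A :: "'a::semiring_1^'n^'m"
  assumes "invertible A"
  shows "matrix_inv A ** (A ** B) = B"
proof -
  have "matrix_inv A ** A = mat 1"
    using assms unfolding invertible_def matrix_inv_def by (rule someI_ex[THEN conjunct2])
  thus ?thesis by (simp add: matrix_mul_assoc)
qed

theorem lemma4p3:
  fixes T :: "real^'k::finite^'k" and mu0 :: "(nat \<Rightarrow> 'k) pmf"
    and N nv L :: nat
  assumes "N \<ge> 1" and "L \<ge> 1" and "row_stochastic T"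
    and "invertible (A_inf N nv L T mu0)"
  shows "T = matrix_inv (A_inf N nv L T mu0) ** b_inf N nv L T mu0"
  using matrix_inv_mult_cancel_left[OF assms(4), of T]
  by (simp add: b_inf_eq_A_inf_mult[OF assms(3)])

end
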